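(* Let $q\ge 8$ be a power of two and $\Omega=\{0,1,\ldots,q-1\}$. Let $\sigma_1$ be the identity permutation, $\sigma_1(i)=i$, and let $\sigma_2(i) = (5i+2) \bmod q$ for $0\le i<q$. Then $\sigma_2$ is a permutation of $\Omega$ and $(\sigma_1,\sigma_2)$ is a nice pair of permutations.
   Context: For a permutation $\sigma$ of a $q$-element set $\Omega$ and $0 \le i < q$, $\sigma(i)$ denotes the element in position $i$. Given two permutations $\sigma_1,\sigma_2$ of $\Omega$, form the $2\times q$ array whose first row is $\sigma_1(0),\ldots,\sigma_1(q-1)$ and whose second row is $\sigma_2(0),\ldots,\sigma_2(q-1)$. Each $a\in\Omega$ occurs once in each row. If $a=\sigma_1(i)$, its first-row neighbors are $l_1=\sigma_1(i-1 \bmod q)$, $r_1=\sigma_1(i+1 \bmod q)$ and the down-neighbor $d=\sigma_2(i)$. If $a=\sigma_2(j)$, its second-row neighbors are $l_2=\sigma_2(j-1\bmod q)$, $r_2=\sigma_2(j+1 \bmod q)$ and the up-neighbor $u=\sigma_1(j)$. The pair $(\sigma_1,\sigma_2)$ is called a nice pair if for every $a\in\Omega$ the six elements $l_1,r_1,d,l_2,r_2,u$ are pairwise distinct. *)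

theory Defs
  imports Main
begin

text \<open>A permutation of the q-element set Omega = {0..<q}, written as a sequence:
  position i (0 \<le> i < q) holds element sigma i.\<close>
definition is_perm :: "nat \<Rightarrow> (nat \<Rightarrow> nat) \<Rightarrow> bool" where
  "is_perm q \<sigma> \<longleftrightarrow> bij_betw \<sigma> {0..<q} {0..<q}"

definition nice_pair :: "nat \<Rightarrow> (nat \<Rightarrow> nat) \<Rightarrow> (nat \<Rightarrow> nat) \<Rightarrow> bool" where
  "nice_pair q \<sigma>1 \<sigma>2 \<longleftrightarrow>
     is_perm q \<sigma>1 \<and> is_perm q \<sigma>2 \<and>
     (\<forall>a\<in>{0..<q}. \<forall>i<q. \<forall>j<q. \<sigma>1 i = a \<longrightarrow> \<sigma>2 j = a \<longrightarrow>
        distinct [\<sigma>1 ((i + q - 1) mod q), \<sigma>1 ((i + 1) mod q), \<sigma>2 i,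
                  \<sigma>2 ((j + q - 1) mod q), \<sigma>2 ((j + 1) mod q), \<sigma>1 j])"

end

theory Submission
  imports Defs "HOL-Number_Theory.Cong"
begin

text \<open>Multiplication by 5 is invertible modulo a power of two, so sigma2 is a permutation.
  As sigma1 is the identity, an element a occupies position a in the first row and a position j
  with a = 5j + 2 (mod q) in the second. Since 8 divides q, it suffices to show that its six
  neighbours are distinct modulo 8. There they are 5j + 1, 5j + 3, j + 4, 5j + 5, 5j + 7 and j:
  the first, second, fourth and fifth are pairwise distinct and of parity opposite to j, while
  j and j + 4 differ.\<close>

lemma is_perm_affine_mod:
  fixes c d q :: nat
  assumes "coprime c q"
  shows "is_perm q (\<lambda>i. (c * i + d) mod q)"
proof -
  let ?\<sigma> = "\<lambda>i. (c * i + d) mod q"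
  have "inj_on ?\<sigma> {0..<q}"
  proof (rule inj_onI)
    fix x y assume "x \<in> {0..<q}" "y \<in> {0..<q}" "?\<sigma> x = ?\<sigma> y"
    then have "[c * x + d = c * y + d] (mod q)" and "x < q" "y < q"
      by (auto simp: cong_def)
    moreover from this(1) have "[x = y] (mod q)"
      using assms by (simp add: cong_add_rcancel_nat cong_mult_lcancel_nat)
    ultimately show "x = y"
      by (simp add: cong_def)
  qed
  moreover have "?\<sigma> ` {0..<q} \<subseteq> {0..<q}"
    by auto
  ultimately show ?thesis
    unfolding is_perm_def bij_betw_def using endo_inj_surj by blast
qed

lemma eight_dvd_power_of_two:
  assumes "8 \<le> (2::nat) ^ k"
  shows "8 dvd (2::nat) ^ k"
proof -
  have "3 \<le> k"
  proof (rule ccontr)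
    assume "\<not> 3 \<le> k"
    then have "(2::nat) ^ k \<le> 2 ^ 2"
      by (intro power_increasing) auto
    with assms show False
      by simp
  qed
  then have "(2::nat) ^ 3 dvd 2 ^ k"
    by (rule le_imp_power_dvd)
  then show ?thesis
    by simp
qed

lemma cong_pred_mod:
  fixes m q i :: nat
  assumes "m dvd q" and "0 < q"
  shows "[(i + q - 1) mod q = i + (m - 1)] (mod m)"
proof -
  obtain t where t: "q = m * t"
    using assms(1) by blast
  with assms(2) have "1 \<le> m" "1 \<le> t"
    by auto
  then have "q = m + m * (t - 1)"
    using t by (metis le_add_diff_inverse mult.right_neutral distrib_left)
  then have "i + q - 1 = i + (m - 1) + m * (t - 1)"
    using \<open>1 \<le> m\<close> by linarith
  then show ?thesis
    using assms(1) by (simp add: cong_def mod_mod_cancel)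
qed

lemma cong_add_multiple:
  fixes a b m k :: nat
  assumes "b = a + m * k"
  shows "[b = a] (mod m)"
  unfolding cong_def assms by (rule mod_mult_self2)

lemma first_row_neighbours_mod_8:
  fixes q a j :: nat
  assumes "8 dvd q" and "0 < q" and a: "[a = 5 * j + 2] (mod 8)"
  shows "[(a + q - 1) mod q = 5 * j + 1] (mod 8)"
    and "[(a + 1) mod q = 5 * j + 3] (mod 8)"
    and "[(5 * a + 2) mod q = j + 4] (mod 8)"
proof -
  have reduce: "[x mod q = x] (mod 8)" for x
    using assms(1) by (simp add: cong_def mod_mod_cancel)
  have "[(a + q - 1) mod q = a + 7] (mod 8)"
    using cong_pred_mod[OF assms(1,2), of a] by simp
  also have "[a + 7 = (5 * j + 2) + 7] (mod 8)"
    using a by (intro cong_add cong_refl)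
  also have "[(5 * j + 2) + 7 = 5 * j + 1] (mod 8)"
    by (rule cong_add_multiple[where k = 1]) simp
  finally show "[(a + q - 1) mod q = 5 * j + 1] (mod 8)" .
  have "[(a + 1) mod q = a + 1] (mod 8)"
    by (rule reduce)
  also have "[a + 1 = (5 * j + 2) + 1] (mod 8)"
    using a by (intro cong_add cong_refl)
  also have "(5 * j + 2) + 1 = 5 * j + 3"
    by simp
  finally show "[(a + 1) mod q = 5 * j + 3] (mod 8)" .
  have "[(5 * a + 2) mod q = 5 * a + 2] (mod 8)"
    by (rule reduce)
  also have "[5 * a + 2 = 5 * (5 * j + 2) + 2] (mod 8)"
    using a by (intro cong_add cong_mult cong_refl)
  also have "[5 * (5 * j + 2) + 2 = j + 4] (mod 8)"
    by (rule cong_add_multiple[where k = "3 * j + 1"]) simp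
  finally show "[(5 * a + 2) mod q = j + 4] (mod 8)" .
qed

lemma second_row_neighbours_mod_8:
  fixes q j :: nat
  assumes "8 dvd q" and "0 < q"
  shows "[(5 * ((j + q - 1) mod q) + 2) mod q = 5 * j + 5] (mod 8)"
    and "[(5 * ((j + 1) mod q) + 2) mod q = 5 * j + 7] (mod 8)"
proof -
  have reduce: "[x mod q = x] (mod 8)" for x
    using assms(1) by (simp add: cong_def mod_mod_cancel)
  have "[(5 * ((j + q - 1) mod q) + 2) mod q = 5 * ((j + q - 1) mod q) + 2] (mod 8)"
    by (rule reduce)
  also have "[5 * ((j + q - 1) mod q) + 2 = 5 * (j + 7) + 2] (mod 8)"
    using cong_pred_mod[OF assms(1,2), of j] by (intro cong_add cong_mult cong_refl) simp
  also have "[5 * (j + 7) + 2 = 5 * j + 5] (mod 8)"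
    by (rule cong_add_multiple[where k = 4]) simp
  finally show "[(5 * ((j + q - 1) mod q) + 2) mod q = 5 * j + 5] (mod 8)" .
  have "[(5 * ((j + 1) mod q) + 2) mod q = 5 * ((j + 1) mod q) + 2] (mod 8)"
    by (rule reduce)
  also have "[5 * ((j + 1) mod q) + 2 = 5 * (j + 1) + 2] (mod 8)"
    using reduce by (intro cong_add cong_mult cong_refl)
  also have "5 * (j + 1) + 2 = 5 * j + 7"
    by simp
  finally show "[(5 * ((j + 1) mod q) + 2) mod q = 5 * j + 7] (mod 8)" .
qed

lemma distinct_neighbour_residues_mod_8:
  "distinct (map (\<lambda>x. x mod 8) [5 * r + 1, 5 * r + 3, r + 4, 5 * r + 5, 5 * r + 7, r :: nat])"
proof -
  define s where "s = r mod 8"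
  have "s < 8"
    by (simp add: s_def)
  then have "s = 0 \<or> s = 1 \<or> s = 2 \<or> s = 3 \<or> s = 4 \<or> s = 5 \<or> s = 6 \<or> s = 7"
    by linarith
  then have "distinct (map (\<lambda>x. x mod 8) [5 * s + 1, 5 * s + 3, s + 4, 5 * s + 5, 5 * s + 7, s])"
    by (elim disjE) simp_all
  moreover have "(5 * r + d) mod 8 = (5 * s + d) mod 8" "(r + d) mod 8 = (s + d) mod 8" for d
    unfolding s_def by (metis mod_add_left_eq mod_mult_right_eq)+
  moreover have "r mod 8 = s mod 8"
    by (simp add: s_def)
  ultimately show ?thesis
    by (simp only: list.map)
qed

lemma distinct_neighbours_affine_5_2:
  fixes q j :: nat
  assumes "8 dvd q" and "0 < q"
  defines "\<sigma> \<equiv> \<lambda>i. (5 * i + 2) mod q"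
  defines "a \<equiv> \<sigma> j"
  shows "distinct [(a + q - 1) mod q, (a + 1) mod q, \<sigma> a,
                   \<sigma> ((j + q - 1) mod q), \<sigma> ((j + 1) mod q), j]"
proof -
  have "[a = 5 * j + 2] (mod 8)"
    using assms(1) by (simp add: a_def \<sigma>_def cong_def mod_mod_cancel)
  with assms(1,2) have "map (\<lambda>x. x mod 8) [(a + q - 1) mod q, (a + 1) mod q, \<sigma> a,
                   \<sigma> ((j + q - 1) mod q), \<sigma> ((j + 1) mod q), j]
      = map (\<lambda>x. x mod 8) [5 * j + 1, 5 * j + 3, j + 4, 5 * j + 5, 5 * j + 7, j]"
    using first_row_neighbours_mod_8 second_row_neighbours_mod_8
    unfolding \<sigma>_def cong_def by (simp only: list.map)
  then show ?thesis
    using distinct_neighbour_residues_mod_8[of j] by (metis distinct_map)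
qed

theorem mainTheorem3:
  fixes q k :: nat
  assumes "q = 2 ^ k" and "q \<ge> 8"
  defines "\<sigma>1 \<equiv> (\<lambda>i::nat. i)"
      and "\<sigma>2 \<equiv> (\<lambda>i::nat. (5 * i + 2) mod q)"
  shows "is_perm q \<sigma>2 \<and> nice_pair q \<sigma>1 \<sigma>2"
proof -
  have "coprime 5 q"
    using assms(1) by (simp add: coprime_power_right_iff)
  then have perm2: "is_perm q \<sigma>2"
    unfolding \<sigma>2_def by (rule is_perm_affine_mod)
  have perm1: "is_perm q \<sigma>1"
    using bij_betw_id by (simp add: is_perm_def \<sigma>1_def id_def)
  have "8 dvd q" and "0 < q"
    using assms(1,2) eight_dvd_power_of_two by auto
  then have "distinct [\<sigma>1 ((a + q - 1) mod q), \<sigma>1 ((a + 1) mod q), \<sigma>2 a,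
      \<sigma>2 ((j + q - 1) mod q), \<sigma>2 ((j + 1) mod q), \<sigma>1 j]"
    if "\<sigma>2 j = a" for a j
    using distinct_neighbours_affine_5_2[of q j] that unfolding \<sigma>1_def \<sigma>2_def by simp
  with perm1 perm2 show ?thesis
    unfolding nice_pair_def by (auto simp: \<sigma>1_def)
qed

end
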